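(* Let $n=4k$ with $k\ge2$, let $\varrho$ be a primitive element of $\mathbb{F}_{2^n}$, let $\omega=\varrho^{(2^k-1)(2^{2k}+1)}$, and let $G(x)=\mathrm{Tr}^{4k}_k(\omega x^{2^k+1})$, with components $G_\lambda(x)=\mathrm{Tr}^k_1(\lambda G(x))=\mathrm{Tr}^n_1(\lambda\omega x^{2^k+1})$ for $\lambda\in\mathbb{F}_{2^k}^*$. Let $\lambda_0=(\omega+\omega^{2^k})^{-1}$. Then $\lambda_0\in\mathbb{F}_{2^k}^*$, $\mathrm{Tr}^k_1(\lambda_0)=1$, and $G_{\lambda_0}$ is a self-dual bent function. For any $\lambda\in\mathbb{F}_{2^k}^*$, letting $\delta$ be the unique element of $\mathbb{F}_{2^k}^*$ with $\delta^{2^k+1}=\lambda\lambda_0^{-1}$, one has $G_\lambda^*(x)=G_{\lambda_0}(\delta^{-1}x)$. In particular, for any $a,b\in\mathbb{F}_{2^{2k}}^*$ with $ab^{2^k}\in\mathbb{F}_{2^k}$, $D_aD_bG_\lambda^*=0$ for all $\lambda\in\mathbb{F}_{2^k}^*$ with $\mathrm{Tr}^k_1(\lambda)=1$.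
   Context: $\mathrm{Tr}^m_1(x)=\sum_{i=0}^{m-1}x^{2^i}$ and $\mathrm{Tr}^{4k}_k(x)=x+x^{2^k}+x^{2^{2k}}+x^{2^{3k}}$. For a bent Boolean function $f$ on $\mathbb{F}_{2^n}$ (i.e. $|W_f(a)|=2^{n/2}$ for all $a$, $W_f(a)=\sum_x(-1)^{f(x)+\mathrm{Tr}^n_1(ax)}$), the dual $f^*$ is defined by $W_f(a)=2^{n/2}(-1)^{f^*(a)}$; $f$ is self-dual if $f^*=f$. $D_aD_bf(x)=f(x)+f(x+a)+f(x+b)+f(x+a+b)$. *)

theory Defs
  imports Main
begin

text \<open>Finite field F_{2^n} is modelled as a finite field type 'a with CARD('a) = 2^n.
  Boolean functions take values in the prime subfield {0,1} of 'a.\<close>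

definition tr :: "nat \<Rightarrow> 'a::field \<Rightarrow> 'a" where
  "tr m x = (\<Sum>i<m. x ^ (2 ^ i))"

definition trk4 :: "nat \<Rightarrow> 'a::field \<Rightarrow> 'a" where
  "trk4 k x = x + x ^ (2 ^ k) + x ^ (2 ^ (2 * k)) + x ^ (2 ^ (3 * k))"

definition Fsub :: "nat \<Rightarrow> 'a::field set" where
  "Fsub m = {x. x ^ (2 ^ m) = x}"

definition primitive :: "'a::field \<Rightarrow> bool" where
  "primitive r \<longleftrightarrow> r \<noteq> 0 \<and> (\<forall>x. x \<noteq> 0 \<longrightarrow> (\<exists>i::nat. x = r ^ i))"

definition chi :: "'a::zero \<Rightarrow> int" where
  "chi y = (if y = 0 then 1 else -1)"

definition walsh :: "nat \<Rightarrow> ('a::{field,finite} \<Rightarrow> 'a) \<Rightarrow> 'a \<Rightarrow> int" where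
  "walsh n f a = (\<Sum>x\<in>UNIV. chi (f x + tr n (a * x)))"

definition bent :: "nat \<Rightarrow> ('a::{field,finite} \<Rightarrow> 'a) \<Rightarrow> bool" where
  "bent n f \<longleftrightarrow> (\<forall>a. \<bar>walsh n f a\<bar> = 2 ^ (n div 2))"

text \<open>Dual: W_f(a) = 2^{n/2} (-1)^{f*(a)} (meaningful for bent f).\<close>
definition dual :: "nat \<Rightarrow> ('a::{field,finite} \<Rightarrow> 'a) \<Rightarrow> 'a \<Rightarrow> 'a" where
  "dual n f a = (if walsh n f a = 2 ^ (n div 2) then 0 else 1)"

definition D2 :: "'a::field \<Rightarrow> 'a \<Rightarrow> ('a \<Rightarrow> 'a) \<Rightarrow> 'a \<Rightarrow> 'a" where
  "D2 a b f x = f x + f (x + a) + f (x + b) + f (x + a + b)"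

definition omega :: "nat \<Rightarrow> 'a::field \<Rightarrow> 'a" where
  "omega k r = r ^ ((2 ^ k - 1) * (2 ^ (2 * k) + 1))"

definition Gmap :: "nat \<Rightarrow> 'a::field \<Rightarrow> 'a \<Rightarrow> 'a" where
  "Gmap k r x = trk4 k (omega k r * x ^ (2 ^ k + 1))"

definition Gcomp :: "nat \<Rightarrow> 'a::field \<Rightarrow> 'a \<Rightarrow> 'a \<Rightarrow> 'a" where
  "Gcomp k r l x = tr k (l * Gmap k r x)"

definition lambda0 :: "nat \<Rightarrow> 'a::field \<Rightarrow> 'a" where
  "lambda0 k r = inverse (omega k r + omega k r ^ (2 ^ k))"

end

theory Submission
  imports Defs "HOL-Computational_Algebra.Polynomial"
begin

text \<open>
  Write q = 2^k, T = Tr^{4k}_1 and E = F_{q^2}. For c in E with c + c^q = 1 the quadratic form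
  Q(x) = T(c x^{q+1}) satisfies Q(x + v) = Q(x) + T(x v^q) for every v in E: the two cross terms
  combine because T(e y^q) = T(e^q y) for e in E, and T vanishes on E. Averaging the Walsh sum
  of Q over these shifts, and using that v \<mapsto> T(w v^q) is a nontrivial character of E unless
  w is in E, gives W_Q(a) = q^2 (-1)^{Q(a)}: Q is bent and self-dual.

  The choice of lambda_0 is exactly what makes c = lambda_0 omega satisfy c + c^q = 1; since
  omega^{q+1} = 1 also c^2 + c = lambda_0^2, whence Tr^k_1(lambda_0) = c^q + c = 1. Every
  component is a rescaling G_lambda(x) = Q(delta x), so its dual is Q(delta^{-1} x), again of
  the form T(C x^{q+1}); the second derivative D_a D_b of such a form is the constant
  T(C (a b^q + a^q b)), which vanishes when b is in E and a b^q is in F_q.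
\<close>

section \<open>Frobenius powers, the trace and the subfields\<close>

lemma power_power2_add: "(x::'a::monoid_mult) ^ 2 ^ (a + b) = (x ^ 2 ^ a) ^ 2 ^ b"
  by (simp add: power_add power_mult)

lemma tr_0 [simp]: "tr 0 x = 0"
  by (simp add: tr_def)

lemma tr_Suc: "tr (Suc m) x = tr m x + x ^ 2 ^ m"
  by (simp add: tr_def)

lemma tr_0_right [simp]: "tr m 0 = 0"
  by (simp add: tr_def power_0_left)

lemma tr_add_length: "tr (a + b) x = tr a x + tr b (x ^ 2 ^ a)"
  by (induction b) (simp_all add: tr_Suc power_power2_add add.assoc)

lemma tr_square: "x + tr m (x ^ 2) = tr m x + x ^ 2 ^ m"
proof -
  have "tr (Suc m) x = x + tr m (x ^ 2)"
    using tr_add_length[of 1 m x] by (simp add: tr_def)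
  then show ?thesis
    by (simp add: tr_Suc)
qed

lemma Fsub_power2_mult_eq: "x \<in> Fsub m \<Longrightarrow> x ^ 2 ^ (m * j) = x"
  by (induction j) (simp_all add: Fsub_def power_power2_add)

lemma Fsub_subset_mult: "Fsub m \<subseteq> Fsub (m * j)"
  using Fsub_power2_mult_eq by (auto simp: Fsub_def)

lemma Fsub_mult: "x \<in> Fsub m \<Longrightarrow> y \<in> Fsub m \<Longrightarrow> x * y \<in> Fsub m"
  by (simp add: Fsub_def power_mult_distrib)

lemma Fsub_inverse: "x \<in> Fsub m \<Longrightarrow> inverse x \<in> Fsub m"
  by (simp add: Fsub_def power_inverse)

lemma Fsub_power: "x \<in> Fsub m \<Longrightarrow> x ^ j \<in> Fsub m"
  by (simp add: Fsub_def flip: power_mult) (metis mult.commute power_mult)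

lemma zero_Fsub [simp]: "0 \<in> Fsub m" and one_Fsub [simp]: "1 \<in> Fsub m"
  by (simp_all add: Fsub_def)

lemma tr_square_Fsub: "x \<in> Fsub m \<Longrightarrow> tr m (x ^ 2) = tr m x"
  using tr_square[of x m] by (simp add: Fsub_def)

lemma trk4_mult_Fsub: "l \<in> Fsub k \<Longrightarrow> trk4 k (l * y) = l * trk4 k y"
  using Fsub_power2_mult_eq[of l k 2] Fsub_power2_mult_eq[of l k 3]
  by (simp add: trk4_def Fsub_def power_mult_distrib distrib_left mult.commute)

lemma card_Fsub_le:
  assumes "0 < m"
  shows "card (Fsub m :: 'a::field set) \<le> 2 ^ m"
proof -
  let ?p = "monom (1::'a) (2 ^ m) - [:0, 1:]"
  have "(2::nat) ^ m \<ge> 2"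
    using assms by (simp add: self_le_power)
  then have "coeff [:0, 1::'a:] (2 ^ m) = 0" and deg: "degree ?p \<le> 2 ^ m"
    by (simp_all add: coeff_eq_0 degree_diff_le degree_monom_le)
  then have lead: "coeff ?p (2 ^ m) = 1"
    by simp
  have p: "?p \<noteq> 0"
  proof
    assume "?p = 0"
    with lead show False
      by simp
  qed
  have "Fsub m = {x. poly ?p x = 0}"
    by (simp add: Fsub_def poly_monom)
  then show ?thesis
    using card_poly_roots_bound[OF p] deg by simp
qed

lemma ex_tr_Fsub_neq_0:
  assumes "card (Fsub m :: 'a::field set) = 2 ^ m" and "0 < m"
  shows "\<exists>u \<in> Fsub m. tr m (u::'a) \<noteq> 0"
proof (rule ccontr)
  let ?p = "\<Sum>i<m. monom (1::'a) (2 ^ i)"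
  assume "\<not> ?thesis"
  then have "Fsub m \<subseteq> {x. poly ?p x = 0}"
    by (auto simp: poly_sum poly_monom tr_def)
  have "coeff ?p 1 = 1"
    using assms(2) by (simp add: coeff_sum coeff_monom sum.delta' flip: power_eq_1_iff)
  then have p: "?p \<noteq> 0"
    by auto
  have "degree ?p \<le> 2 ^ (m - 1)"
    by (intro degree_sum_le) (auto intro!: order_trans[OF degree_monom_le] power_increasing)
  moreover have "(2::nat) ^ (m - 1) < 2 ^ m"
    using assms(2) by simp
  ultimately have "card {x. poly ?p x = 0} < 2 ^ m"
    using card_poly_roots_bound[OF p] by linarith
  then show False
    using card_mono[OF poly_roots_finite[OF p] \<open>Fsub m \<subseteq> _\<close>] assms(1) by simp
qed

section \<open>Characteristic 2\<close>

context
  assumes char2: "CHAR('a::field) = 2"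
begin

lemma two_eq_0_char2 [simp]: "(2::'a) = 0"
  using of_nat_CHAR[where 'a='a] by (simp add: char2)

lemma add_self_char2 [simp]: "x + x = (0::'a)"
  by (simp flip: mult_2)

lemma add_self_left_char2 [simp]: "x + (x + y) = (y::'a)"
  by (simp flip: add.assoc)

lemma add_eq_0_iff_char2: "x + y = (0::'a) \<longleftrightarrow> x = y"
  using uminus_CHAR_2[OF char2, of y] by (metis add_eq_0_iff2)

lemma power2_power_add_char2: "(x + y :: 'a) ^ 2 ^ i = x ^ 2 ^ i + y ^ 2 ^ i"
  by (rule freshmans_dream') (simp_all add: char2)

lemma Fsub_add: "x \<in> Fsub m \<Longrightarrow> y \<in> Fsub m \<Longrightarrow> x + y \<in> (Fsub m :: 'a set)"
  by (simp add: Fsub_def power2_power_add_char2)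

lemma ex1_Fsub_power_conj_plus_1:
  assumes "0 < k" and \<mu>: "\<mu> \<in> Fsub k - {0}"
  shows "\<exists>!\<delta>. \<delta> \<in> Fsub k - {0} \<and> \<delta> ^ (2 ^ k + 1) = (\<mu>::'a)"
proof -
  have sq: "\<delta> ^ (2 ^ k + 1) = \<delta> ^ 2" if "\<delta> \<in> Fsub k" for \<delta> :: 'a
    using that by (simp add: Fsub_def power2_eq_square)
  define \<delta> where "\<delta> = \<mu> ^ 2 ^ (k - 1)"
  have "\<delta> ^ 2 = \<mu> ^ 2 ^ Suc (k - 1)"
    by (simp add: \<delta>_def power_mult mult.commute flip: power_mult)
  then have "\<delta> ^ 2 = \<mu>"
    using \<mu> \<open>0 < k\<close> by (simp add: Fsub_def)
  moreover have "\<delta> \<in> Fsub k - {0}"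
    using \<mu> by (simp add: \<delta>_def Fsub_power)
  moreover have "e = \<delta>" if "e ^ 2 = \<delta> ^ 2" for e
    using power2_power_add_char2[of e \<delta> 1] that add_eq_0_iff_char2 by simp
  ultimately show ?thesis
    using sq by (metis DiffD1)
qed

lemma add_conj_pairing_eq_0:
  assumes "b \<in> Fsub (2 * k)" and "a * b ^ 2 ^ k \<in> Fsub k"
  shows "a * b ^ 2 ^ k + a ^ 2 ^ k * (b::'a) = 0"
proof -
  have "(b ^ 2 ^ k) ^ 2 ^ k = b"
    using assms(1) power_power2_add[of b k k] by (simp add: Fsub_def mult_2)
  then have "(a * b ^ 2 ^ k) ^ 2 ^ k = a ^ 2 ^ k * b"
    by (simp add: power_mult_distrib)
  then show ?thesis
    using assms(2) add_eq_0_iff_char2 by (simp add: Fsub_def)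
qed

lemma tr_add: "tr m (x + y :: 'a) = tr m x + tr m y"
  by (simp add: tr_def power2_power_add_char2 sum.distrib)

lemma power2_tr: "(tr m x :: 'a) ^ 2 = tr m (x ^ 2)"
  by (simp add: tr_def freshmans_dream_sum char2 flip: power_mult) (simp add: mult.commute power_mult)

lemma tr_square_add_self: "tr m (y ^ 2 + y :: 'a) = y ^ 2 ^ m + y"
proof -
  have "tr m (y ^ 2 + y) = (y + tr m (y ^ 2)) + (y + tr m y)"
    by (simp add: tr_add ac_simps)
  also have "\<dots> = (tr m y + tr m y) + (y ^ 2 ^ m + y)"
    by (simp only: tr_square ac_simps)
  finally show ?thesis
    by simp
qed

lemma tr_double_Fsub: "x \<in> Fsub m \<Longrightarrow> tr (2 * m) (x::'a) = 0"
  using tr_add_length[of m m x] by (simp add: Fsub_def mult_2)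

lemma tr_eq_tr_trk4: "tr (4 * k) (x::'a) = tr k (trk4 k x)"
proof -
  have "tr (k + (k + (k + k))) x
      = tr k x + (tr k (x ^ 2 ^ k) + (tr k (x ^ 2 ^ (k + k)) + tr k (x ^ 2 ^ (k + (k + k)))))"
    by (simp only: tr_add_length power_power2_add)
  moreover have "4 * k = k + (k + (k + k))" and "2 * k = k + k" and "3 * k = k + (k + k)"
    by simp_all
  ultimately show ?thesis
    by (simp only: trk4_def tr_add add.assoc)
qed

lemma D2_tr_quadratic:
  "D2 a b (\<lambda>x. tr m (C * x ^ (2 ^ j + 1))) x = tr m (C * (a * b ^ 2 ^ j + a ^ 2 ^ j * (b::'a)))"
proof -
  have "\<And>y::'a. y ^ (2 ^ j + 1) = y ^ 2 ^ j * y"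
    by simp
  then have "x ^ (2 ^ j + 1) + (x + a) ^ (2 ^ j + 1) + (x + b) ^ (2 ^ j + 1) + (x + a + b) ^ (2 ^ j + 1)
      = a * b ^ 2 ^ j + a ^ 2 ^ j * b"
    by (simp only: power2_power_add_char2) (simp add: algebra_simps)
  then show ?thesis
    unfolding D2_def by (simp flip: tr_add distrib_left)
qed

end

section \<open>Finite fields of order 2^n\<close>

lemma of_nat_card_UNIV_eq_0: "of_nat (card (UNIV :: 'a::{ring_1,finite} set)) = (0::'a)"
proof -
  have "(\<Sum>y\<in>UNIV. y + 1) = (\<Sum>y\<in>UNIV. y :: 'a)"
    by (rule sum.reindex_bij_witness[of _ "\<lambda>y. y - 1" "\<lambda>y. y + 1"]) auto
  then show ?thesis
    by (simp add: sum.distrib)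
qed

lemma CHAR_eq_2_if_card_power_2:
  assumes "card (UNIV :: 'a::{field,finite} set) = 2 ^ n"
  shows "CHAR('a) = 2"
proof -
  have "prime CHAR('a)"
    by (intro prime_CHAR_semidom finite_imp_CHAR_pos) simp
  moreover have "CHAR('a) dvd 2 ^ n"
    using of_nat_card_UNIV_eq_0[where 'a='a] assms by (metis of_nat_eq_0_iff_char_dvd)
  ultimately show ?thesis
    by (metis prime_dvd_power primes_dvd_imp_eq two_is_prime_nat)
qed

lemma power_card_UNIV_minus_1:
  fixes x :: "'a::{field,finite}"
  assumes "x \<noteq> 0"
  shows "x ^ (card (UNIV :: 'a set) - 1) = 1"
proof -
  let ?S = "UNIV - {0::'a}"
  have "(\<Prod>y\<in>?S. x * y) = (\<Prod>y\<in>?S. y)"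
    by (rule prod.reindex_bij_witness[of _ "\<lambda>y. y / x" "\<lambda>y. x * y"]) (use assms in auto)
  moreover have "(\<Prod>y\<in>?S. y) \<noteq> 0"
    by simp
  ultimately show ?thesis
    by (simp add: prod.distrib card_Diff_singleton)
qed

lemma mem_Fsub_if_card_UNIV:
  assumes "card (UNIV :: 'a::{field,finite} set) = 2 ^ n"
  shows "(x::'a) \<in> Fsub n"
proof (cases "x = 0")
  case False
  have "x ^ 2 ^ n = x ^ Suc (2 ^ n - 1)"
    by simp
  also have "\<dots> = x * x ^ (card (UNIV :: 'a set) - 1)"
    by (simp only: power_Suc assms)
  also have "\<dots> = x"
    using power_card_UNIV_minus_1[OF False] by simp
  finally show ?thesis
    by (simp add: Fsub_def)
qed (simp add: Fsub_def)

context
  fixes n :: nat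
  assumes card_UNIV: "card (UNIV :: 'a::{field,finite} set) = 2 ^ n"
begin

lemma tr_power2: "tr n ((x::'a) ^ 2 ^ i) = tr n x"
proof (induction i)
  case (Suc i)
  then show ?case
    using tr_square_Fsub[OF mem_Fsub_if_card_UNIV[OF card_UNIV, of "x ^ 2 ^ i"]]
    by (simp add: power_mult mult.commute flip: power_mult)
qed simp

lemma tr_eq_0_or_1: "tr n (x::'a) = 0 \<or> tr n x = 1"
proof -
  have "(tr n x) ^ 2 = tr n x"
    using power2_tr[OF CHAR_eq_2_if_card_power_2[OF card_UNIV]]
      tr_square_Fsub[OF mem_Fsub_if_card_UNIV[OF card_UNIV]] by simp
  then show ?thesis
    by (auto simp: power2_eq_square)
qed

lemma chi_tr_add: "chi (tr n x + tr n y) = chi (tr n (x::'a)) * chi (tr n y)"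
  using tr_eq_0_or_1[of x] tr_eq_0_or_1[of y] two_eq_0_char2[OF CHAR_eq_2_if_card_power_2[OF card_UNIV]]
  by (auto simp: chi_def)

end

lemma card_UNIV_minus_1_le_if_primitive:
  fixes \<rho> :: "'a::{field,finite}"
  assumes "primitive \<rho>" and "\<rho> ^ j = 1" and "0 < j"
  shows "card (UNIV :: 'a set) - 1 \<le> j"
proof -
  have sub: "UNIV - {0} \<subseteq> (\<lambda>i. \<rho> ^ i) ` {..<j}"
  proof
    fix x :: 'a
    assume "x \<in> UNIV - {0}"
    then obtain i where "x = \<rho> ^ i"
      using assms(1) by (auto simp: primitive_def)
    also have "\<rho> ^ i = (\<rho> ^ j) ^ (i div j) * \<rho> ^ (i mod j)"
      by (simp only: power_mult[symmetric] power_add[symmetric] mult_div_mod_eq)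
    finally show "x \<in> (\<lambda>i. \<rho> ^ i) ` {..<j}"
      using assms(2,3) by simp
  qed
  have "card (UNIV - {0::'a}) \<le> card ((\<lambda>i. \<rho> ^ i) ` {..<j})"
    by (rule card_mono[OF _ sub]) simp
  also have "\<dots> \<le> card {..<j}"
    by (rule card_image_le) simp
  finally show ?thesis
    by (simp add: card_Diff_singleton)
qed

lemma inj_on_power_primitive:
  fixes \<rho> :: "'a::{field,finite}"
  assumes prim: "primitive \<rho>"
  shows "inj_on (\<lambda>i. \<rho> ^ i) {..<card (UNIV :: 'a set) - 1}"
proof (rule linorder_inj_onI')
  fix i j
  assume ij: "i \<in> {..<card (UNIV :: 'a set) - 1}" "j \<in> {..<card (UNIV :: 'a set) - 1}" "i < j"
  show "\<rho> ^ i \<noteq> \<rho> ^ j"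
  proof
    assume "\<rho> ^ i = \<rho> ^ j"
    moreover have "\<rho> ^ j = \<rho> ^ i * \<rho> ^ (j - i)"
      using ij(3) by (simp flip: power_add)
    moreover have "\<rho> \<noteq> 0"
      using prim by (simp add: primitive_def)
    ultimately have "\<rho> ^ (j - i) = 1"
      by simp
    then have "card (UNIV :: 'a set) - 1 \<le> j - i"
      using card_UNIV_minus_1_le_if_primitive[OF prim] ij(3) by simp
    then show False
      using ij by simp
  qed
qed

lemma power_conj_plus_1_Fsub:
  assumes "card (UNIV :: 'a::{field,finite} set) = 2 ^ (2 * m)"
  shows "(x::'a) ^ (2 ^ m + 1) \<in> Fsub m"
proof -
  have "(2 ^ m + 1) * 2 ^ m = 2 ^ (2 * m) + (2 ^ m :: nat)"
    by (simp add: distrib_right mult_2 power_add)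
  then have "(x ^ (2 ^ m + 1)) ^ 2 ^ m = x ^ 2 ^ (2 * m) * x ^ 2 ^ m"
    by (simp only: power_mult[symmetric]) (simp only: power_add)
  then show ?thesis
    using mem_Fsub_if_card_UNIV[OF assms, of x] by (simp add: Fsub_def)
qed

lemma card_Fsub_half:
  fixes \<rho> :: "'a::{field,finite}"
  assumes card: "card (UNIV :: 'a set) = 2 ^ (2 * m)" and prim: "primitive \<rho>" and "0 < m"
  shows "card (Fsub m :: 'a set) = 2 ^ m"
proof (rule antisym)
  show "card (Fsub m :: 'a set) \<le> 2 ^ m"
    using card_Fsub_le assms(3) .
next
  let ?N = "2 ^ m :: nat"
  let ?f = "\<lambda>i. \<rho> ^ ((?N + 1) * i)"
  have "card (UNIV :: 'a set) = ?N * ?N"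
    by (simp add: card power_add mult_2)
  then have N: "card (UNIV :: 'a set) - 1 = (?N + 1) * (?N - 1)"
    by (simp add: algebra_simps)
  have "inj_on ((\<lambda>i. \<rho> ^ i) \<circ> (\<lambda>i. (?N + 1) * i)) {..<?N - 1}"
  proof (rule comp_inj_on)
    have "(?N + 1) * i < card (UNIV :: 'a set) - 1" if "i < ?N - 1" for i
      unfolding N using that by (intro mult_strict_left_mono) auto
    then show "inj_on (\<lambda>i. \<rho> ^ i) ((\<lambda>i. (?N + 1) * i) ` {..<?N - 1})"
      by (intro inj_on_subset[OF inj_on_power_primitive[OF prim]]) auto
  qed (rule inj_on_mult, simp)
  then have inj: "inj_on ?f {..<?N - 1}"
    by (simp add: o_def)
  have "?f i = (\<rho> ^ i) ^ (?N + 1)" for i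
    by (simp only: mult.commute[of "?N + 1" i] power_mult)
  with power_conj_plus_1_Fsub[OF card] prim have sub: "?f ` {..<?N - 1} \<subseteq> Fsub m - {0}"
    by (auto simp: primitive_def simp del: power_Suc)
  have "?N - 1 = card (?f ` {..<?N - 1})"
    using card_image[OF inj] by simp
  also have "\<dots> \<le> card (Fsub m - {0::'a})"
    by (rule card_mono[OF _ sub]) simp
  also have "\<dots> = card (Fsub m :: 'a set) - 1"
    by (simp add: card_Diff_singleton)
  finally have "?N - 1 \<le> card (Fsub m :: 'a set) - 1" .
  moreover have "0 < card (Fsub m :: 'a set)"
    using zero_Fsub[of m, where 'a='a] card_gt_0_iff[of "Fsub m :: 'a set"] finite_class.finite by blast
  ultimately show "?N \<le> card (Fsub m :: 'a set)"
    by linarith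
qed

context
  fixes m :: nat
  assumes card_UNIV: "card (UNIV :: 'a::{field,finite} set) = 2 ^ (2 * m)"
    and card_Fsub: "card (Fsub m :: 'a set) = 2 ^ m"
    and m_pos: "0 < m"
begin

lemma ex_tr_mult_Fsub_neq_0:
  assumes "(w::'a) \<notin> Fsub m"
  shows "\<exists>u \<in> Fsub m. tr (2 * m) (w * u) \<noteq> 0"
proof -
  have char2: "CHAR('a) = 2"
    by (rule CHAR_eq_2_if_card_power_2[OF card_UNIV])
  let ?z = "w + w ^ 2 ^ m"
  have "?z \<noteq> 0"
    using assms add_eq_0_iff_char2[OF char2] by (auto simp: Fsub_def)
  have "w ^ 2 ^ (m + m) = w"
    using mem_Fsub_if_card_UNIV[OF card_UNIV] by (simp add: Fsub_def mult_2)
  then have "?z \<in> Fsub m"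
    by (simp add: Fsub_def power2_power_add_char2[OF char2] power_power2_add add.commute)
  obtain u' :: 'a where u': "u' \<in> Fsub m" "tr m u' \<noteq> 0"
    using ex_tr_Fsub_neq_0[OF card_Fsub m_pos] by blast
  define u where "u = u' / ?z"
  have u: "u \<in> Fsub m"
    unfolding u_def divide_inverse by (intro Fsub_mult Fsub_inverse u' \<open>?z \<in> Fsub m\<close>)
  have "tr (2 * m) (w * u) = tr m (w * u) + tr m ((w * u) ^ 2 ^ m)"
    using tr_add_length[of m m] by (simp add: mult_2)
  also have "\<dots> = tr m (?z * u)"
    using u by (simp add: Fsub_def power_mult_distrib distrib_right tr_add[OF char2])
  also have "\<dots> = tr m u'"
    using \<open>?z \<noteq> 0\<close> by (simp add: u_def)
  finally show ?thesis
    using u u'(2) by (intro bexI[of _ u]) simp_all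
qed

lemma sum_chi_tr_mult_Fsub:
  "(\<Sum>u\<in>Fsub m. chi (tr (2 * m) ((w::'a) * u))) = (if w \<in> Fsub m then 2 ^ m else 0)"
proof (cases "w \<in> Fsub m")
  case True
  have char2: "CHAR('a) = 2"
    by (rule CHAR_eq_2_if_card_power_2[OF card_UNIV])
  then have "tr (2 * m) (w * u) = 0" if "u \<in> Fsub m" for u
    using tr_double_Fsub Fsub_mult True that by blast
  then show ?thesis
    using True card_Fsub by (simp add: chi_def)
next
  case False
  note char2 = CHAR_eq_2_if_card_power_2[OF card_UNIV]
  note [simp] = add_self_left_char2[OF char2] add_self_char2[OF char2]
  obtain u0 where u0: "u0 \<in> Fsub m" "tr (2 * m) (w * u0) \<noteq> 0"
    using ex_tr_mult_Fsub_neq_0[OF False] by blast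
  let ?S = "\<Sum>u\<in>Fsub m. chi (tr (2 * m) (w * u))"
  have "?S = (\<Sum>u\<in>Fsub m. chi (tr (2 * m) (w * (u + u0))))"
    by (rule sum.reindex_bij_witness[of _ "\<lambda>u. u + u0" "\<lambda>u. u + u0"])
      (auto simp: add.assoc Fsub_add[OF char2] u0(1))
  also have "\<dots> = (\<Sum>u\<in>Fsub m. chi (tr (2 * m) (w * u)) * chi (tr (2 * m) (w * u0)))"
    by (simp add: distrib_left tr_add[OF char2] chi_tr_add[OF card_UNIV])
  also have "\<dots> = - ?S"
    using u0(2) by (simp add: chi_def sum_negf)
  finally show ?thesis
    using False by simp
qed

end

section \<open>Walsh transforms and a self-dual quadratic form\<close>

lemma walsh_compose_scale:
  fixes f :: "'a::{field,finite} \<Rightarrow> 'a"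
  assumes "\<delta> \<noteq> 0"
  shows "walsh n (\<lambda>x. f (\<delta> * x)) a = walsh n f (inverse \<delta> * a)"
  unfolding walsh_def
  by (rule sum.reindex_bij_witness[of _ "\<lambda>y. inverse \<delta> * y" "\<lambda>x. \<delta> * x"])
    (use assms in \<open>auto simp: field_simps\<close>)

lemma bent_if_walsh_eq_chi:
  assumes "\<And>a. walsh n f a = 2 ^ (n div 2) * chi (g a)"
  shows "bent n f"
  using assms by (simp add: bent_def chi_def abs_mult)

lemma dual_eq_if_walsh_eq_chi:
  assumes "\<And>a. walsh n f a = 2 ^ (n div 2) * chi (g a)" and "\<And>a. g a = 0 \<or> g a = 1"
  shows "dual n f = g"
proof
  fix a
  show "dual n f a = g a"
    using assms[of a] by (auto simp: dual_def chi_def)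
qed

definition quad_trace :: "nat \<Rightarrow> 'a::field \<Rightarrow> 'a \<Rightarrow> 'a" where
  "quad_trace k c x = tr (4 * k) (c * x ^ (2 ^ k + 1))"

lemma quad_trace_scale: "quad_trace k c (\<delta> * x) = quad_trace k (c * \<delta> ^ (2 ^ k + 1)) x"
  by (simp add: quad_trace_def power_mult_distrib ac_simps)

lemma D2_quad_trace:
  assumes "CHAR('a::field) = 2"
  shows "D2 a b (quad_trace k c) x = tr (4 * k) (c * (a * b ^ 2 ^ k + a ^ 2 ^ k * (b::'a)))"
  using D2_tr_quadratic[OF assms] by (simp add: quad_trace_def[abs_def])

locale self_dual_quad_trace =
  fixes k :: nat and c :: "'a::{field,finite}"
  assumes card_UNIV: "card (UNIV :: 'a set) = 2 ^ (4 * k)"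
    and card_Fsub: "card (Fsub (2 * k) :: 'a set) = 2 ^ (2 * k)"
    and k_pos: "0 < k"
    and c_Fsub: "c \<in> Fsub (2 * k)"
    and c_add_conj: "c + c ^ 2 ^ k = 1"
begin

lemma CHAR_eq_2: "CHAR('a) = 2"
  using CHAR_eq_2_if_card_power_2[OF card_UNIV] .

lemma power_conj3_Fsub: "e \<in> Fsub (2 * k) \<Longrightarrow> e ^ 2 ^ (3 * k) = (e::'a) ^ 2 ^ k"
  using power_power2_add[of e "2 * k" k] by (simp add: Fsub_def add.commute)

lemma tr_mult_conj: "e \<in> Fsub (2 * k) \<Longrightarrow> tr (4 * k) (e * y ^ 2 ^ k) = tr (4 * k) (e ^ 2 ^ k * (y::'a))"
proof -
  assume e: "e \<in> Fsub (2 * k)"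
  have "(y ^ 2 ^ k) ^ 2 ^ (3 * k) = y ^ 2 ^ (4 * k)"
    by (simp flip: power_power2_add)
  also have "\<dots> = y"
    using mem_Fsub_if_card_UNIV[OF card_UNIV] by (simp add: Fsub_def)
  finally have "(e * y ^ 2 ^ k) ^ 2 ^ (3 * k) = e ^ 2 ^ k * y"
    by (simp add: power_mult_distrib power_conj3_Fsub[OF e])
  then show ?thesis
    using tr_power2[OF card_UNIV, of "e * y ^ 2 ^ k" "3 * k"] by simp
qed

lemma tr_quadratic_shift:
  assumes v: "v \<in> Fsub (2 * k)"
  shows "tr (4 * k) (c * (x + v) ^ (2 ^ k + 1) + a * (x + v))
       = tr (4 * k) (c * x ^ (2 ^ k + 1) + a * x) + tr (4 * k) ((x + a ^ 2 ^ k) * (v::'a) ^ 2 ^ k)"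
proof -
  let ?q = "2 ^ k" and ?T = "tr (4 * k)"
  note tr_add = tr_add[OF CHAR_eq_2]
  have "tr (2 * (2 * k)) (c * v ^ (?q + 1)) = 0"
    by (rule tr_double_Fsub[OF CHAR_eq_2 Fsub_mult[OF c_Fsub Fsub_power[OF v]]])
  then have vv: "?T (c * v ^ (?q + 1)) = 0"
    by (simp add: mult.assoc[symmetric])
  have xv: "?T (c * x ^ ?q * v) = ?T (c ^ ?q * v ^ ?q * x)"
    using tr_mult_conj[OF Fsub_mult[OF c_Fsub v], of x] by (simp add: power_mult_distrib ac_simps)
  have av: "?T (a * v) = ?T (a ^ ?q * v ^ ?q)"
    using tr_power2[OF card_UNIV, of "a * v" k] by (simp add: power_mult_distrib)
  have "(x + v) ^ (?q + 1) = x ^ (?q + 1) + x ^ ?q * v + v ^ ?q * x + v ^ (?q + 1)"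
    by (simp add: power2_power_add_char2[OF CHAR_eq_2] algebra_simps)
  then have expand: "c * (x + v) ^ (?q + 1) + a * (x + v)
      = (c * x ^ (?q + 1) + a * x) + c * x ^ ?q * v + c * v ^ ?q * x + c * v ^ (?q + 1) + a * v"
    by (simp only: distrib_left) (simp only: ac_simps)
  have "c ^ ?q * v ^ ?q * x + c * v ^ ?q * x = (c + c ^ ?q) * (x * v ^ ?q)"
    by (simp add: algebra_simps)
  then have cross: "?T (c ^ ?q * v ^ ?q * x) + ?T (c * v ^ ?q * x) + ?T (a ^ ?q * v ^ ?q)
      = ?T ((x + a ^ ?q) * v ^ ?q)"
    by (simp only: c_add_conj mult_1 distrib_right flip: tr_add)
  have "?T (c * (x + v) ^ (?q + 1) + a * (x + v))
      = ?T (c * x ^ (?q + 1) + a * x)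
        + (?T (c ^ ?q * v ^ ?q * x) + ?T (c * v ^ ?q * x) + ?T (a ^ ?q * v ^ ?q))"
    unfolding expand by (simp only: tr_add xv vv av add_0_right) (simp only: ac_simps)
  then show ?thesis
    by (simp only: cross)
qed

lemma conj_c_add_1: "c ^ 2 ^ k + 1 = c"
  using c_add_conj by (metis add.commute add_self_left_char2[OF CHAR_eq_2])

lemma tr_quadratic_at_conj:
  "tr (4 * k) (c * (a ^ 2 ^ k) ^ (2 ^ k + 1) + a * a ^ 2 ^ k) = quad_trace k c (a::'a)"
proof -
  let ?q = "2 ^ k" and ?T = "tr (4 * k)"
  have "(a ^ ?q) ^ (?q + 1) = (a ^ (?q + 1)) ^ ?q"
    by (simp only: power_mult[symmetric] mult.commute)
  then have "?T (c * (a ^ ?q) ^ (?q + 1) + a * a ^ ?q) = ?T (c ^ ?q * a ^ (?q + 1)) + ?T (a ^ (?q + 1))"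
    using tr_mult_conj[OF c_Fsub] by (simp add: tr_add[OF CHAR_eq_2])
  also have "\<dots> = ?T ((c ^ ?q + 1) * a ^ (?q + 1))"
    by (simp add: tr_add[OF CHAR_eq_2] distrib_right)
  finally show ?thesis
    by (simp add: conj_c_add_1 quad_trace_def)
qed

lemma tr_quadratic_coset:
  assumes "x + a ^ 2 ^ k \<in> Fsub (2 * k)"
  shows "tr (4 * k) (c * x ^ (2 ^ k + 1) + a * x) = quad_trace k c (a::'a)"
proof -
  let ?q = "2 ^ k" and ?T = "tr (4 * k)"
  let ?H = "\<lambda>x. ?T (c * x ^ (?q + 1) + a * x)"
  have "?H (a ^ ?q + (x + a ^ ?q)) = ?H (a ^ ?q) + ?T ((a ^ ?q + a ^ ?q) * (x + a ^ ?q) ^ ?q)"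
    by (rule tr_quadratic_shift[OF assms])
  moreover have "a ^ ?q + (x + a ^ ?q) = x"
    by (simp only: add.left_commute[of "a ^ ?q" x] add_self_char2[OF CHAR_eq_2] add_0_right)
  ultimately have "?H x = ?H (a ^ ?q)"
    by (simp only: add_self_char2[OF CHAR_eq_2] mult_zero_left tr_0_right add_0_right)
  also have "\<dots> = quad_trace k c a"
    by (rule tr_quadratic_at_conj)
  finally show ?thesis .
qed

lemma sum_chi_tr_mult_conj:
  "(\<Sum>v\<in>Fsub (2 * k). chi (tr (4 * k) ((w::'a) * v ^ 2 ^ k)))
    = (if w \<in> Fsub (2 * k) then 2 ^ (2 * k) else 0)"
proof -
  have conj_conj: "(v ^ 2 ^ k) ^ 2 ^ k = (v::'a)" if "v \<in> Fsub (2 * k)" for v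
    using that power_power2_add[of v k k] by (simp add: Fsub_def mult_2)
  have "(\<Sum>v\<in>Fsub (2 * k). chi (tr (4 * k) (w * v ^ 2 ^ k)))
      = (\<Sum>u\<in>Fsub (2 * k). chi (tr (2 * (2 * k)) (w * u)))"
    by (rule sum.reindex_bij_witness[of _ "\<lambda>u. u ^ 2 ^ k" "\<lambda>v. v ^ 2 ^ k"])
      (auto simp: conj_conj Fsub_power)
  also have "\<dots> = (if w \<in> Fsub (2 * k) then 2 ^ (2 * k) else 0)"
    by (rule sum_chi_tr_mult_Fsub) (use card_UNIV card_Fsub k_pos in simp_all)
  finally show ?thesis .
qed

lemma walsh_quad_trace: "walsh (4 * k) (quad_trace k c) a = 2 ^ (2 * k) * chi (quad_trace k c a)"
proof -
  let ?q = "2 ^ k" and ?T = "tr (4 * k)" and ?E = "Fsub (2 * k) :: 'a set"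
  define H where "H x = ?T (c * x ^ (?q + 1) + a * x)" for x
  have W: "walsh (4 * k) (quad_trace k c) a = (\<Sum>x\<in>UNIV. chi (H (x + v)))" for v
  proof -
    have "walsh (4 * k) (quad_trace k c) a = (\<Sum>x\<in>UNIV. chi (H x))"
      by (simp add: walsh_def H_def quad_trace_def tr_add[OF CHAR_eq_2])
    also have "\<dots> = (\<Sum>x\<in>UNIV. chi (H (x + v)))"
      by (rule sum.reindex_bij_witness[of _ "\<lambda>x. x + v" "\<lambda>x. x - v"]) auto
    finally show ?thesis .
  qed
  have H_coset: "H x = quad_trace k c a" if "x + a ^ ?q \<in> ?E" for x
    unfolding H_def using that by (rule tr_quadratic_coset)
  have card_coset: "card {x. x + a ^ ?q \<in> ?E} = card ?E"
    by (rule bij_betw_same_card[of "\<lambda>x. x + a ^ ?q"], rule bij_betw_byWitness[of _ "\<lambda>e. e - a ^ ?q"])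
      auto
  have "2 ^ (2 * k) * walsh (4 * k) (quad_trace k c) a = (\<Sum>v\<in>?E. \<Sum>x\<in>UNIV. chi (H (x + v)))"
    using W card_Fsub by simp
  also have "\<dots> = (\<Sum>v\<in>?E. \<Sum>x\<in>UNIV. chi (H x) * chi (?T ((x + a ^ ?q) * v ^ ?q)))"
    by (intro sum.cong refl) (simp only: H_def tr_quadratic_shift chi_tr_add[OF card_UNIV])
  also have "\<dots> = (\<Sum>x\<in>UNIV. chi (H x) * (\<Sum>v\<in>?E. chi (?T ((x + a ^ ?q) * v ^ ?q))))"
    by (subst sum.swap) (simp add: sum_distrib_left)
  also have "\<dots> = (\<Sum>x\<in>{x. x + a ^ ?q \<in> ?E}. 2 ^ (2 * k) * chi (quad_trace k c a))"
    by (simp add: sum_chi_tr_mult_conj H_coset sum.If_cases if_distrib cong: if_cong)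
  also have "\<dots> = 2 ^ (2 * k) * (2 ^ (2 * k) * chi (quad_trace k c a))"
    using card_coset card_Fsub by simp
  finally show ?thesis
    by simp
qed

lemma walsh_quad_trace_scale:
  assumes "\<delta> \<noteq> 0"
  shows "walsh (4 * k) (\<lambda>x. quad_trace k c (\<delta> * x)) a
    = 2 ^ (4 * k div 2) * chi (quad_trace k c (inverse \<delta> * a))"
  using walsh_compose_scale[OF assms] walsh_quad_trace by simp

lemma bent_quad_trace_scale: "\<delta> \<noteq> 0 \<Longrightarrow> bent (4 * k) (\<lambda>x. quad_trace k c (\<delta> * x))"
  by (rule bent_if_walsh_eq_chi[OF walsh_quad_trace_scale])

lemma dual_quad_trace_scale:
  assumes "\<delta> \<noteq> 0"
  shows "dual (4 * k) (\<lambda>x. quad_trace k c (\<delta> * x)) = (\<lambda>x. quad_trace k c (inverse \<delta> * x))"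
proof (rule dual_eq_if_walsh_eq_chi)
  show "walsh (4 * k) (\<lambda>x. quad_trace k c (\<delta> * x)) a
      = 2 ^ (4 * k div 2) * chi (quad_trace k c (inverse \<delta> * a))" for a
    by (rule walsh_quad_trace_scale[OF assms])
  show "quad_trace k c (inverse \<delta> * a) = 0 \<or> quad_trace k c (inverse \<delta> * a) = 1" for a
    unfolding quad_trace_def by (rule tr_eq_0_or_1[OF card_UNIV])
qed

end

section \<open>The components of G\<close>

lemma power4_minus_1_factor: "(Q - 1) * (Q ^ 2 + 1) * (Q + 1) = Q ^ 4 - (1::nat)"
  by (cases Q) (simp_all add: algebra_simps power2_eq_square power4_eq_xxxx)

lemma two_power_mult: "(2::nat) ^ (j * k) = (2 ^ k) ^ j"
  by (simp add: mult.commute flip: power_mult)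

locale primitive_gf_4k =
  fixes k :: nat and \<rho> :: "'a::{field,finite}"
  assumes k_pos: "0 < k"
    and card_UNIV: "card (UNIV :: 'a set) = 2 ^ (4 * k)"
    and prim: "primitive \<rho>"
begin

lemma card_UNIV_minus_1_eq: "card (UNIV :: 'a set) - 1 = (2 ^ k - 1) * ((2 ^ k) ^ 2 + 1) * (2 ^ k + 1)"
  using power4_minus_1_factor[of "2 ^ k"] card_UNIV by (simp only: two_power_mult)

lemma omega_eq: "omega k \<rho> = \<rho> ^ ((2 ^ k - 1) * ((2 ^ k) ^ 2 + 1))"
  by (simp only: omega_def two_power_mult)

lemma omega_power_conj_plus_1: "omega k \<rho> ^ (2 ^ k + 1) = 1"
proof -
  have "omega k \<rho> ^ (2 ^ k + 1) = \<rho> ^ (card (UNIV :: 'a set) - 1)"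
    by (simp only: omega_eq card_UNIV_minus_1_eq power_mult)
  then show ?thesis
    using power_card_UNIV_minus_1[of \<rho>] prim by (simp add: primitive_def)
qed

lemma omega_Fsub: "omega k \<rho> \<in> Fsub (2 * k)"
proof -
  let ?\<omega> = "omega k \<rho>" and ?Q = "2 ^ k :: nat"
  have "?Q ^ 2 = (?Q + 1) * (?Q - 1) + 1"
    by (simp add: power2_eq_square algebra_simps)
  then have "?\<omega> ^ ?Q ^ 2 = (?\<omega> ^ (?Q + 1)) ^ (?Q - 1) * ?\<omega>"
    by (simp only: power_add power_mult power_one_right)
  also have "\<dots> = ?\<omega>"
    by (simp only: omega_power_conj_plus_1 power_one mult_1)
  finally show ?thesis
    by (simp only: Fsub_def two_power_mult mem_Collect_eq)
qed

lemma omega_conj_neq: "omega k \<rho> ^ 2 ^ k \<noteq> omega k \<rho>"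
proof
  let ?\<omega> = "omega k \<rho>" and ?Q = "2 ^ k :: nat"
  let ?e = "(?Q - 1) * (?Q ^ 2 + 1) * (?Q - 1)"
  assume conj: "?\<omega> ^ ?Q = ?\<omega>"
  have "\<rho> \<noteq> 0"
    using prim by (simp add: primitive_def)
  have "?Q \<ge> 2"
    using k_pos by (simp add: self_le_power)
  then have pos: "0 < (?Q - 1) * (?Q ^ 2 + 1)"
    by simp
  then have "?e < (?Q - 1) * (?Q ^ 2 + 1) * (?Q + 1)"
    by (rule mult_strict_left_mono[rotated]) simp
  then have e: "0 < ?e" "?e < card (UNIV :: 'a set) - 1"
    using pos \<open>?Q \<ge> 2\<close> by (simp_all only: card_UNIV_minus_1_eq) simp
  have "?\<omega> ^ ?Q = ?\<omega> ^ (?Q - 1) * ?\<omega>"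
    by (simp flip: power_Suc2)
  then have "?\<omega> ^ (?Q - 1) = 1"
    using conj \<open>\<rho> \<noteq> 0\<close> by (simp add: omega_def)
  then have "\<rho> ^ ?e = 1"
    by (simp only: omega_eq power_mult)
  then show False
    using card_UNIV_minus_1_le_if_primitive[OF prim _ e(1)] e(2) by simp
qed

lemma CHAR_eq_2: "CHAR('a) = 2"
  by (rule CHAR_eq_2_if_card_power_2[OF card_UNIV])

lemma omega_add_conj_Fsub: "omega k \<rho> + omega k \<rho> ^ 2 ^ k \<in> Fsub k - {0}"
proof -
  have "(omega k \<rho> ^ 2 ^ k) ^ 2 ^ k = omega k \<rho>"
    using omega_Fsub power_power2_add[of "omega k \<rho>" k k] by (simp add: Fsub_def mult_2)
  then show ?thesis
    using omega_conj_neq add_eq_0_iff_char2[OF CHAR_eq_2]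
    by (auto simp: Fsub_def power2_power_add_char2[OF CHAR_eq_2] add.commute)
qed

lemma lambda0_Fsub: "lambda0 k \<rho> \<in> Fsub k - {0}"
  using omega_add_conj_Fsub by (auto simp: lambda0_def intro: Fsub_inverse)

lemma lambda0_omega_add_conj: "lambda0 k \<rho> * omega k \<rho> + (lambda0 k \<rho> * omega k \<rho>) ^ 2 ^ k = 1"
proof -
  have "lambda0 k \<rho> ^ 2 ^ k = lambda0 k \<rho>"
    using lambda0_Fsub by (simp add: Fsub_def)
  then have "lambda0 k \<rho> * omega k \<rho> + (lambda0 k \<rho> * omega k \<rho>) ^ 2 ^ k
      = lambda0 k \<rho> * (omega k \<rho> + omega k \<rho> ^ 2 ^ k)"
    by (simp add: power_mult_distrib distrib_left)
  also have "\<dots> = 1"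
    using omega_add_conj_Fsub by (simp add: lambda0_def)
  finally show ?thesis .
qed

lemma tr_lambda0: "tr k (lambda0 k \<rho>) = 1"
proof -
  let ?l = "lambda0 k \<rho>" and ?w = "omega k \<rho>"
  let ?c = "?l * ?w"
  have "?l * (?w + ?w ^ 2 ^ k) = 1"
    using omega_add_conj_Fsub by (simp add: lambda0_def)
  then have "?c ^ 2 + ?c = ?c ^ 2 + ?c * (?l * (?w + ?w ^ 2 ^ k))"
    by simp
  also have "\<dots> = ?l ^ 2 * (?w ^ 2 + ?w * (?w + ?w ^ 2 ^ k))"
    by (simp add: power2_eq_square algebra_simps)
  also have "?w ^ 2 + ?w * (?w + ?w ^ 2 ^ k) = 1"
    using omega_power_conj_plus_1 by (simp add: power2_eq_square algebra_simps two_eq_0_char2[OF CHAR_eq_2])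
  finally have "tr k (?l ^ 2) = ?c ^ 2 ^ k + ?c"
    using tr_square_add_self[OF CHAR_eq_2, of k ?c] by simp
  also have "\<dots> = 1"
    using lambda0_omega_add_conj by (simp add: add.commute)
  finally show ?thesis
    using tr_square_Fsub[of ?l k] lambda0_Fsub by simp
qed

lemma self_dual_quad_trace_lambda0: "self_dual_quad_trace k (lambda0 k \<rho> * omega k \<rho>)"
proof
  show "card (Fsub (2 * k) :: 'a set) = 2 ^ (2 * k)"
    using card_Fsub_half[OF _ prim] card_UNIV k_pos by simp
  show "lambda0 k \<rho> * omega k \<rho> \<in> Fsub (2 * k)"
    using Fsub_subset_mult[of k 2] lambda0_Fsub omega_Fsub by (auto simp: mult.commute intro: Fsub_mult)
qed (use card_UNIV k_pos lambda0_omega_add_conj in simp_all)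

lemma Gcomp_eq_quad_trace: "l \<in> Fsub k \<Longrightarrow> Gcomp k \<rho> l = quad_trace k (l * omega k \<rho>)"
  by (simp add: fun_eq_iff Gcomp_def Gmap_def quad_trace_def tr_eq_tr_trk4[OF CHAR_eq_2]
      flip: trk4_mult_Fsub mult.assoc)

lemma Gcomp_eq_Gcomp_lambda0_scale:
  assumes "l \<in> Fsub k" and \<delta>: "\<delta> ^ (2 ^ k + 1) = l * inverse (lambda0 k \<rho>)"
  shows "Gcomp k \<rho> l = (\<lambda>x. Gcomp k \<rho> (lambda0 k \<rho>) (\<delta> * x))"
proof -
  have "lambda0 k \<rho> * omega k \<rho> * \<delta> ^ (2 ^ k + 1) = l * omega k \<rho>"
    unfolding \<delta> using lambda0_Fsub by (simp add: field_simps)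
  then show ?thesis
    using lambda0_Fsub assms(1)
    by (simp only: Gcomp_eq_quad_trace quad_trace_scale Diff_iff)
qed

lemma Gcomp_lambda0_eq: "Gcomp k \<rho> (lambda0 k \<rho>) = quad_trace k (lambda0 k \<rho> * omega k \<rho>)"
  using Gcomp_eq_quad_trace lambda0_Fsub by simp

lemma ex1_root_div_lambda0:
  "l \<in> Fsub k - {0}
    \<Longrightarrow> \<exists>!\<delta>. \<delta> \<in> Fsub k - {0} \<and> \<delta> ^ (2 ^ k + 1) = l * inverse (lambda0 k \<rho>)"
  using lambda0_Fsub
  by (intro ex1_Fsub_power_conj_plus_1[OF CHAR_eq_2 k_pos]) (auto intro: Fsub_mult Fsub_inverse)

lemma bent_dual_Gcomp:
  assumes "l \<in> Fsub k" and "\<delta> \<in> Fsub k - {0}" and "\<delta> ^ (2 ^ k + 1) = l * inverse (lambda0 k \<rho>)"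
  shows "bent (4 * k) (Gcomp k \<rho> l)"
    and "dual (4 * k) (Gcomp k \<rho> l) = (\<lambda>x. Gcomp k \<rho> (lambda0 k \<rho>) (inverse \<delta> * x))"
proof -
  interpret self_dual_quad_trace k "lambda0 k \<rho> * omega k \<rho>"
    by (rule self_dual_quad_trace_lambda0)
  show "bent (4 * k) (Gcomp k \<rho> l)"
    "dual (4 * k) (Gcomp k \<rho> l) = (\<lambda>x. Gcomp k \<rho> (lambda0 k \<rho>) (inverse \<delta> * x))"
    using assms Gcomp_eq_Gcomp_lambda0_scale bent_quad_trace_scale dual_quad_trace_scale
    by (simp_all add: Gcomp_lambda0_eq)
qed

lemma D2_dual_Gcomp:
  assumes "b \<in> Fsub (2 * k)" and "a * b ^ 2 ^ k \<in> Fsub k" and l: "l \<in> Fsub k - {0}"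
  shows "D2 a b (dual (4 * k) (Gcomp k \<rho> l)) x = 0"
proof -
  obtain \<delta> where \<delta>: "\<delta> \<in> Fsub k - {0}" "\<delta> ^ (2 ^ k + 1) = l * inverse (lambda0 k \<rho>)"
    using ex1_root_div_lambda0[OF l] by blast
  have "dual (4 * k) (Gcomp k \<rho> l) = quad_trace k (lambda0 k \<rho> * omega k \<rho> * inverse \<delta> ^ (2 ^ k + 1))"
    using bent_dual_Gcomp(2)[OF _ \<delta>] l by (simp add: Gcomp_lambda0_eq quad_trace_scale)
  then show ?thesis
    using D2_quad_trace[OF CHAR_eq_2] add_conj_pairing_eq_0[OF CHAR_eq_2 assms(1,2)] by simp
qed

end

theorem lemma4:
  fixes k :: nat and \<rho> :: "'a::{field,finite}"
  assumes "k \<ge> 2" and "card (UNIV :: 'a set) = 2 ^ (4 * k)" and "primitive \<rho>"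
  shows "(\<forall>l \<in> Fsub k - {0}. \<forall>x. Gcomp k \<rho> l x = tr (4 * k) (l * omega k \<rho> * x ^ (2 ^ k + 1)))
       \<and> lambda0 k \<rho> \<in> Fsub k - {0}
       \<and> tr k (lambda0 k \<rho>) = 1
       \<and> bent (4 * k) (Gcomp k \<rho> (lambda0 k \<rho>))
       \<and> dual (4 * k) (Gcomp k \<rho> (lambda0 k \<rho>)) = Gcomp k \<rho> (lambda0 k \<rho>)
       \<and> (\<forall>l \<in> Fsub k - {0}.
            bent (4 * k) (Gcomp k \<rho> l)
          \<and> (\<exists>!\<delta>. \<delta> \<in> Fsub k - {0} \<and> \<delta> ^ (2 ^ k + 1) = l * inverse (lambda0 k \<rho>))
          \<and> (\<forall>\<delta> \<in> Fsub k - {0}. \<delta> ^ (2 ^ k + 1) = l * inverse (lambda0 k \<rho>) \<longrightarrow>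
                 dual (4 * k) (Gcomp k \<rho> l) = (\<lambda>x. Gcomp k \<rho> (lambda0 k \<rho>) (inverse \<delta> * x))))
       \<and> (\<forall>a b l. a \<in> Fsub (2 * k) - {0} \<longrightarrow> b \<in> Fsub (2 * k) - {0} \<longrightarrow>
            a * b ^ (2 ^ k) \<in> Fsub k \<longrightarrow> l \<in> Fsub k - {0} \<longrightarrow> tr k l = 1 \<longrightarrow>
            (\<forall>x. D2 a b (dual (4 * k) (Gcomp k \<rho> l)) x = 0))"
proof -
  interpret primitive_gf_4k k \<rho>
    using assms by unfold_locales simp_all
  have components: "bent (4 * k) (Gcomp k \<rho> l)
      \<and> (\<forall>\<delta> \<in> Fsub k - {0}. \<delta> ^ (2 ^ k + 1) = l * inverse (lambda0 k \<rho>) \<longrightarrow>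
            dual (4 * k) (Gcomp k \<rho> l) = (\<lambda>x. Gcomp k \<rho> (lambda0 k \<rho>) (inverse \<delta> * x)))"
    if l: "l \<in> Fsub k - {0}" for l
    using bent_dual_Gcomp ex1_root_div_lambda0[OF l] l by blast
  have "dual (4 * k) (Gcomp k \<rho> (lambda0 k \<rho>)) = Gcomp k \<rho> (lambda0 k \<rho>)"
    using bent_dual_Gcomp(2)[of "lambda0 k \<rho>" 1] lambda0_Fsub by simp
  then show ?thesis
    using Gcomp_eq_quad_trace components lambda0_Fsub tr_lambda0 ex1_root_div_lambda0 D2_dual_Gcomp
    by (simp add: quad_trace_def mult.assoc)
qed

end
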